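(* Let $m\ge 2$ be an integer, let $\alpha_0\in(0,\tfrac{\pi}{2})$ and put $b=\tfrac12\tan\alpha_0>0$, so that $\arg(\tfrac12+bi)=\alpha_0$ and $\arg(\tfrac12-bi)=-\alpha_0$. Let $$S^m_{\alpha_0}=\Big\{z\in\mathbb{C}^m:\ \text{for each }k,\ z_k=0\text{ or }|\arg z_k|\le\alpha_0,\ \ \sum_{k=1}^m z_k=1\Big\}.$$ Then $S^m_{\alpha_0}$ is convex, and its set of extreme points consists of exactly $m^2$ points, namely: (i) the $m$ standard basis vectors $e^1,\dots,e^m$ of $\mathbb{C}^m$, and (ii) the $m(m-1)$ vectors $\eta$ having exactly two nonzero coordinates, one of them equal to $\tfrac12+bi$ and another equal to $\tfrac12-bi$ (one such vector for each ordered pair $(k,l)$ of distinct indices, with $\eta_k=\tfrac12+bi$, $\eta_l=\tfrac12-bi$, and all other coordinates $0$).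
   Context: $\arg$ denotes the principal argument with values in $(-\pi,\pi]$. A point $a$ of a set $S\subseteq\mathbb{C}^m$ is an extreme point if there are no $p,q\in S$ with $p\neq q$ and $\lambda\in(0,1)$ such that $a=\lambda p+(1-\lambda)q$. *)

theory Defs
  imports "HOL-Analysis.Analysis"
begin

text \<open>The set S^m_alpha0 in C^m, with coordinates indexed by a finite type 'n (m = CARD('n)).
  Arg is the principal argument with values in (-pi, pi].\<close>
definition sector_simplex :: "real \<Rightarrow> (complex ^ 'n::finite) set" where
  "sector_simplex \<alpha>0 =
     {z. (\<forall>k. z $ k = 0 \<or> \<bar>Arg (z $ k)\<bar> \<le> \<alpha>0) \<and> (\<Sum>k\<in>UNIV. z $ k) = 1}"

definition eta_vec :: "real \<Rightarrow> 'n::finite \<Rightarrow> 'n \<Rightarrow> complex ^ 'n" where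
  "eta_vec b k l = (\<chi> j. if j = k then Complex (1/2) b
                         else if j = l then Complex (1/2) (- b) else 0)"

end

theory Submission
  imports Defs
begin

text \<open>With \<open>t = tan \<alpha>0\<close>, the closed sector \<open>{w. w = 0 \<or> \<bar>Arg w\<bar> \<le> \<alpha>0}\<close> is the cone
  \<open>\<bar>Im w\<bar> \<le> t Re w\<close> spanned by the two edge rays \<open>1 \<plusminus> t i\<close>. Measuring each coordinate by
  the two nonnegative linear forms \<open>t Re w \<plusminus> Im w\<close>, the constraint \<open>\<Sum>z\<^sub>k = 1\<close> says that
  each form has total mass \<open>t\<close>, so \<open>S\<close> is linearly a product of two simplices. A point is
  extreme iff each of the two masses sits in a single coordinate (otherwise moving mass
  between two coordinates along one edge ray gives a symmetric perturbation), and the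
  \<open>m\<^sup>2\<close> choices of these two coordinates give \<open>e\<^sub>k\<close> when they coincide and \<open>\<eta>\<close> when they
  differ.\<close>

text \<open>\<open>w = (edge_coord t 1 w *\<^sub>R (1 + t i) + edge_coord t (-1) w *\<^sub>R (1 - t i)) / (2 t)\<close>:
  up to the factor \<open>2 t\<close> these are the coordinates of \<open>w\<close> along the two edge rays.\<close>

definition edge_coord :: "real \<Rightarrow> real \<Rightarrow> complex \<Rightarrow> real" where
  "edge_coord t \<sigma> w = t * Re w + \<sigma> * Im w"

lemma linear_edge_coord: "linear (edge_coord t \<sigma>)"
  by (rule linearI) (simp_all add: edge_coord_def algebra_simps)

lemma edge_coord_one [simp]: "edge_coord t \<sigma> 1 = t"
  by (simp add: edge_coord_def)

lemma edge_coord_edge_ray: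
  assumes "\<sigma> \<in> {-1, 1}" "\<rho> \<in> {-1, 1}"
  shows "edge_coord t \<rho> (Complex 1 (\<sigma> * t)) = (if \<rho> = \<sigma> then 2 * t else 0)"
  using assms by (auto simp: edge_coord_def)

lemma complex_eq_iff_edge_coords:
  assumes "t \<noteq> 0"
  shows "v = w \<longleftrightarrow> edge_coord t 1 v = edge_coord t 1 w \<and> edge_coord t (-1) v = edge_coord t (-1) w"
proof
  assume "edge_coord t 1 v = edge_coord t 1 w \<and> edge_coord t (-1) v = edge_coord t (-1) w"
  then have "t * Re v = t * Re w" "Im v = Im w"
    unfolding edge_coord_def by linarith+
  then show "v = w"
    using assms by (simp add: complex_eq_iff)
qed simp

lemma abs_Im_le_iff_edge_coords:
  "\<bar>Im w\<bar> \<le> t * Re w \<longleftrightarrow> (\<forall>\<sigma>\<in>{-1, 1}. 0 \<le> edge_coord t \<sigma> w)"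
  by (auto simp: edge_coord_def)

lemma abs_arctan_le_iff:
  assumes "0 \<le> a" "a < pi/2"
  shows "\<bar>arctan y\<bar> \<le> a \<longleftrightarrow> \<bar>y\<bar> \<le> tan a"
proof -
  have "arctan (tan a) = a" using assms by (intro arctan_tan) auto
  then show ?thesis
    by (metis abs_le_iff arctan_le_iff arctan_minus minus_le_iff)
qed

lemma sector_iff_abs_Im_le:
  assumes a: "0 < a" "a < pi/2"
  shows "(w = 0 \<or> \<bar>Arg w\<bar> \<le> a) \<longleftrightarrow> \<bar>Im w\<bar> \<le> tan a * Re w"
proof (cases "Re w > 0")
  case True
  have "\<bar>Arg w\<bar> \<le> a \<longleftrightarrow> \<bar>Im w / Re w\<bar> \<le> tan a"
    using True a by (simp add: arg_conv_arctan abs_arctan_le_iff)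
  also have "\<dots> \<longleftrightarrow> \<bar>Im w\<bar> \<le> tan a * Re w"
    using True by (simp add: pos_divide_le_eq)
  finally show ?thesis
    using True by auto
next
  case False
  have "tan a > 0"
    using a by (simp add: tan_gt_zero)
  then have "tan a * Re w \<le> 0"
    using False by (simp add: mult_nonneg_nonpos)
  have "w = 0" if "\<bar>Im w\<bar> \<le> tan a * Re w"
  proof -
    have "tan a * Re w = 0"
      using that \<open>tan a * Re w \<le> 0\<close> abs_ge_zero[of "Im w"] by linarith
    then show ?thesis
      using that \<open>tan a > 0\<close> by (simp add: complex_eq_iff)
  qed
  moreover have "\<not> \<bar>Arg w\<bar> \<le> a" if "w \<noteq> 0"
    using Arg_Re_pos[of w] False that a by auto
  ultimately show ?thesis
    by (cases "w = 0") auto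
qed

lemma Arg_Complex_tan:
  assumes "0 < x" "-(pi/2) < a" "a < pi/2"
  shows "Arg (Complex x (x * tan a)) = a"
  using assms by (simp add: arg_conv_arctan arctan_tan)

definition wedge_simplex :: "real \<Rightarrow> (complex ^ 'n::finite) set" where
  "wedge_simplex t =
     {z. (\<forall>k. \<forall>\<sigma>\<in>{-1, 1}. 0 \<le> edge_coord t \<sigma> (z $ k)) \<and> (\<Sum>k\<in>UNIV. z $ k) = 1}"

lemma sector_simplex_eq_wedge_simplex:
  assumes "0 < \<alpha>" "\<alpha> < pi/2"
  shows "sector_simplex \<alpha> = wedge_simplex (tan \<alpha>)"
  unfolding sector_simplex_def wedge_simplex_def
  by (simp only: sector_iff_abs_Im_le[OF assms] abs_Im_le_iff_edge_coords)

lemma sum_edge_coord_wedge_simplex: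
  assumes "z \<in> wedge_simplex t"
  shows "(\<Sum>k\<in>UNIV. edge_coord t \<sigma> (z $ k)) = t"
  using assms by (simp add: wedge_simplex_def flip: linear_sum[OF linear_edge_coord])

lemma convex_wedge_simplex: "convex (wedge_simplex t)"
proof (rule convexI)
  fix x y :: "complex ^ 'n" and u v :: real
  assume x: "x \<in> wedge_simplex t" and y: "y \<in> wedge_simplex t"
    and uv: "0 \<le> u" "0 \<le> v" "u + v = 1"
  have "0 \<le> edge_coord t \<sigma> ((u *\<^sub>R x + v *\<^sub>R y) $ k)" if "\<sigma> \<in> {-1, 1}" for k \<sigma>
    using x y uv that
    by (auto simp: wedge_simplex_def linear_add[OF linear_edge_coord] linear_scale[OF linear_edge_coord])
  moreover have "(\<Sum>k\<in>UNIV. (u *\<^sub>R x + v *\<^sub>R y) $ k) = 1"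
    using x y uv by (simp add: wedge_simplex_def sum.distrib flip: scaleR_sum_right scaleR_add_left)
  ultimately show "u *\<^sub>R x + v *\<^sub>R y \<in> wedge_simplex t"
    by (simp add: wedge_simplex_def)
qed

text \<open>The edge masses of \<open>sector_vertex t k l\<close> sit at \<open>k\<close> (upper edge) and \<open>l\<close> (lower edge);
  for \<open>k = l\<close> they add up to \<open>(1 + t i)/2 + (1 - t i)/2 = 1\<close> in one coordinate.\<close>

definition sector_vertex :: "real \<Rightarrow> 'n::finite \<Rightarrow> 'n \<Rightarrow> complex ^ 'n" where
  "sector_vertex t k l = (if k = l then axis k 1 else eta_vec (t/2) k l)"

lemma edge_coord_sector_vertex:
  "edge_coord t 1 (sector_vertex t k l $ j) = (if j = k then t else 0)"
  "edge_coord t (-1) (sector_vertex t k l $ j) = (if j = l then t else 0)"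
  by (auto simp: sector_vertex_def eta_vec_def axis_def edge_coord_def)

lemma sum_eq_single:
  fixes f :: "'i::finite \<Rightarrow> 'a::comm_monoid_add"
  assumes "\<And>j. j \<noteq> k \<Longrightarrow> f j = 0"
  shows "(\<Sum>j\<in>UNIV. f j) = f k"
  using assms by (subst sum.mono_neutral_right[of UNIV "{k}"]) auto

lemma sector_vertex_in_wedge_simplex:
  assumes "t > 0"
  shows "sector_vertex t k l \<in> wedge_simplex t"
proof -
  have "edge_coord t 1 (\<Sum>j\<in>UNIV. sector_vertex t k l $ j) = edge_coord t 1 1"
    "edge_coord t (-1) (\<Sum>j\<in>UNIV. sector_vertex t k l $ j) = edge_coord t (-1) 1"
    by (simp_all add: linear_sum[OF linear_edge_coord] edge_coord_sector_vertex)
  then have "(\<Sum>j\<in>UNIV. sector_vertex t k l $ j) = 1"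
    using assms by (intro iffD2[OF complex_eq_iff_edge_coords]) auto
  then show ?thesis
    using assms by (auto simp: wedge_simplex_def edge_coord_sector_vertex)
qed

lemma eq_sector_vertex_if_edge_coords_vanish:
  assumes t: "t > 0" and z: "z \<in> wedge_simplex t"
    and upper: "\<And>j. j \<noteq> k \<Longrightarrow> edge_coord t 1 (z $ j) = 0"
    and lower: "\<And>j. j \<noteq> l \<Longrightarrow> edge_coord t (-1) (z $ j) = 0"
  shows "z = sector_vertex t k l"
proof -
  have "edge_coord t 1 (z $ k) = t"
    using sum_edge_coord_wedge_simplex[OF z] sum_eq_single[of k] upper by metis
  then have "edge_coord t 1 (z $ j) = edge_coord t 1 (sector_vertex t k l $ j)" for j
    using upper by (simp add: edge_coord_sector_vertex)
  moreover have "edge_coord t (-1) (z $ l) = t"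
    using sum_edge_coord_wedge_simplex[OF z] sum_eq_single[of l] lower by metis
  then have "edge_coord t (-1) (z $ j) = edge_coord t (-1) (sector_vertex t k l $ j)" for j
    using lower by (simp add: edge_coord_sector_vertex)
  ultimately show ?thesis
    using t complex_eq_iff_edge_coords[of t] by (simp add: vec_eq_iff)
qed

lemma extreme_point_of_sector_vertex:
  assumes t: "t > 0"
  shows "sector_vertex t k l extreme_point_of wedge_simplex t"
  unfolding extreme_point_of_def
proof (intro conjI ballI notI)
  show "sector_vertex t k l \<in> wedge_simplex t"
    using sector_vertex_in_wedge_simplex[OF t] .
next
  fix a b
  assume a: "a \<in> wedge_simplex t" and b: "b \<in> wedge_simplex t"
    and "sector_vertex t k l \<in> open_segment a b"
  then obtain u where "a \<noteq> b" "0 < u" "u < 1"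
    and x: "sector_vertex t k l = (1 - u) *\<^sub>R a + u *\<^sub>R b"
    by (auto simp: in_segment)
  have vanish: "edge_coord t \<sigma> (a $ j) = 0 \<and> edge_coord t \<sigma> (b $ j) = 0"
    if "\<sigma> \<in> {-1, 1}" "edge_coord t \<sigma> (sector_vertex t k l $ j) = 0" for \<sigma> j
  proof -
    have "(1 - u) * edge_coord t \<sigma> (a $ j) + u * edge_coord t \<sigma> (b $ j) = 0"
      using that(2) by (simp add: x linear_add[OF linear_edge_coord] linear_scale[OF linear_edge_coord])
    moreover have "0 \<le> edge_coord t \<sigma> (a $ j)" "0 \<le> edge_coord t \<sigma> (b $ j)"
      using a b that(1) by (auto simp: wedge_simplex_def)
    ultimately show ?thesis
      using \<open>0 < u\<close> \<open>u < 1\<close> by (simp add: add_nonneg_eq_0_iff)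
  qed
  have "c = sector_vertex t k l" if "c \<in> {a, b}" for c
  proof (rule eq_sector_vertex_if_edge_coords_vanish[OF t])
    show "c \<in> wedge_simplex t"
      using a b that by blast
    show "edge_coord t 1 (c $ j) = 0" if "j \<noteq> k" for j
      using vanish[of 1 j] \<open>c \<in> {a, b}\<close> that by (auto simp: edge_coord_sector_vertex)
    show "edge_coord t (-1) (c $ j) = 0" if "j \<noteq> l" for j
      using vanish[of "-1" j] \<open>c \<in> {a, b}\<close> that by (auto simp: edge_coord_sector_vertex)
  qed
  then show False
    using \<open>a \<noteq> b\<close> by blast
qed

lemma not_extreme_point_of_perturbation:
  fixes x d :: "'a::real_vector"
  assumes "x + d \<in> S" "x - d \<in> S" "d \<noteq> 0"
  shows "\<not> x extreme_point_of S"
proof -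
  have "midpoint (x + d) (x - d) = x"
    by (simp add: midpoint_eq_iff)
  moreover have "x + d \<noteq> x - d"
    using assms(3) by (simp add: eq_diff_eq add.assoc flip: scaleR_2)
  ultimately have "x \<in> open_segment (x + d) (x - d)"
    using midpoint_in_open_segment by metis
  then show ?thesis
    using assms(1,2) by (auto simp: extreme_point_of_def)
qed

lemma not_extreme_point_of_wedge_simplex:
  assumes t: "t > 0" and \<sigma>: "\<sigma> \<in> {-1, 1}" and z: "z \<in> wedge_simplex t" and "i \<noteq> j"
    and pos: "0 < edge_coord t \<sigma> (z $ i)" "0 < edge_coord t \<sigma> (z $ j)"
  shows "\<not> z extreme_point_of wedge_simplex t"
proof -
  \<comment> \<open>move edge mass \<open>\<plusminus>\<epsilon>\<close> between \<open>i\<close> and \<open>j\<close> along the ray \<open>1 + \<sigma> t i\<close>; the other edge form is unaffected\<close>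
  define \<epsilon> where "\<epsilon> = min (edge_coord t \<sigma> (z $ i)) (edge_coord t \<sigma> (z $ j))"
  define c where "c = (\<epsilon> / (2 * t)) *\<^sub>R Complex 1 (\<sigma> * t)"
  define d where "d = axis i c - axis j c"
  have "\<epsilon> > 0"
    using pos by (simp add: \<epsilon>_def)
  have edge_c: "edge_coord t \<rho> c = (if \<rho> = \<sigma> then \<epsilon> else 0)" if "\<rho> \<in> {-1, 1}" for \<rho>
    using t \<sigma> that by (simp add: c_def linear_scale[OF linear_edge_coord] edge_coord_edge_ray)
  have bound: "\<bar>edge_coord t \<rho> (d $ k)\<bar> \<le> edge_coord t \<rho> (z $ k)" if "\<rho> \<in> {-1, 1}" for \<rho> k
  proof -
    have "0 \<le> edge_coord t \<rho> (z $ k)"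
      using z that by (auto simp: wedge_simplex_def)
    moreover have "edge_coord t \<rho> (d $ k) =
        (if k = i then edge_coord t \<rho> c else 0) - (if k = j then edge_coord t \<rho> c else 0)"
      by (simp add: d_def axis_def linear_diff[OF linear_edge_coord] linear_0[OF linear_edge_coord])
    ultimately show ?thesis
      using edge_c[OF that] \<open>i \<noteq> j\<close> \<open>\<epsilon> > 0\<close> by (auto simp: \<epsilon>_def)
  qed
  have sum_d: "(\<Sum>k\<in>UNIV. d $ k) = 0"
    by (simp add: d_def sum_subtractf axis_def)
  have perturb: "z + s *\<^sub>R d \<in> wedge_simplex t" if "\<bar>s\<bar> = 1" for s
  proof -
    have "0 \<le> edge_coord t \<rho> (z $ k) + s * edge_coord t \<rho> (d $ k)" if "\<rho> \<in> {-1, 1}" for \<rho> k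
      using bound[OF that, of k] \<open>\<bar>s\<bar> = 1\<close> by (cases "s \<ge> 0") (auto simp: abs_le_iff)
    with z sum_d show ?thesis
      by (simp add: wedge_simplex_def sum.distrib linear_add[OF linear_edge_coord]
          linear_scale[OF linear_edge_coord] flip: scaleR_sum_right)
  qed
  have "d $ i = c"
    using \<open>i \<noteq> j\<close> by (simp add: d_def axis_def)
  moreover have "c \<noteq> 0"
    using t \<open>\<epsilon> > 0\<close> by (simp add: c_def complex_eq_iff)
  ultimately have "d \<noteq> 0"
    by auto
  have "z + d \<in> wedge_simplex t" "z - d \<in> wedge_simplex t"
    using perturb[of 1] perturb[of "-1"] by simp_all
  then show ?thesis
    using not_extreme_point_of_perturbation \<open>d \<noteq> 0\<close> by metis
qed

lemma extreme_point_of_wedge_simplex_imp_sector_vertex: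
  assumes t: "t > 0" and ext: "z extreme_point_of wedge_simplex t"
  shows "\<exists>k l. z = sector_vertex t k l"
proof -
  have z: "z \<in> wedge_simplex t"
    using ext by (simp add: extreme_point_of_def)
  have "\<exists>k. \<forall>j. j \<noteq> k \<longrightarrow> edge_coord t \<sigma> (z $ j) = 0" if \<sigma>: "\<sigma> \<in> {-1, 1}" for \<sigma>
  proof -
    have nonneg: "0 \<le> edge_coord t \<sigma> (z $ j)" for j
      using z \<sigma> by (auto simp: wedge_simplex_def)
    obtain k where "edge_coord t \<sigma> (z $ k) \<noteq> 0"
      using sum_edge_coord_wedge_simplex[OF z, of \<sigma>] t by (metis less_irrefl sum.neutral)
    then have "0 < edge_coord t \<sigma> (z $ k)"
      using nonneg[of k] by linarith
    then have "edge_coord t \<sigma> (z $ j) = 0" if "j \<noteq> k" for j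
      using not_extreme_point_of_wedge_simplex[OF t \<sigma> z that] ext nonneg[of j] by fastforce
    then show ?thesis
      by blast
  qed
  then obtain k l where "\<And>j. j \<noteq> k \<Longrightarrow> edge_coord t 1 (z $ j) = 0"
    and "\<And>j. j \<noteq> l \<Longrightarrow> edge_coord t (-1) (z $ j) = 0"
    by (metis insert_iff)
  then show ?thesis
    using eq_sector_vertex_if_edge_coords_vanish[OF t z] by blast
qed

lemma extreme_points_wedge_simplex:
  assumes "t > 0"
  shows "{z. z extreme_point_of wedge_simplex t} = range (case_prod (sector_vertex t))"
proof
  show "{z. z extreme_point_of wedge_simplex t} \<subseteq> range (case_prod (sector_vertex t))"
    using extreme_point_of_wedge_simplex_imp_sector_vertex[OF assms] by (fastforce simp: image_iff)
  show "range (case_prod (sector_vertex t)) \<subseteq> {z. z extreme_point_of wedge_simplex t}"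
    using extreme_point_of_sector_vertex[OF assms] by auto
qed

lemma inj_sector_vertex:
  assumes "t > 0"
  shows "inj (case_prod (sector_vertex t :: 'n::finite \<Rightarrow> 'n \<Rightarrow> complex ^ 'n))"
proof (rule injI, clarsimp)
  fix k l k' l' :: 'n
  assume eq: "sector_vertex t k l = sector_vertex t k' l'"
  have "edge_coord t 1 (sector_vertex t k l $ k) = edge_coord t 1 (sector_vertex t k' l' $ k)"
    "edge_coord t (-1) (sector_vertex t k l $ l) = edge_coord t (-1) (sector_vertex t k' l' $ l)"
    by (simp_all only: eq)
  then show "k = k' \<and> l = l'"
    using assms by (simp add: edge_coord_sector_vertex split: if_splits)
qed

lemma range_sector_vertex:
  "range (case_prod (sector_vertex t)) = {axis k 1 | k. True} \<union> {eta_vec (t/2) k l | k l. k \<noteq> l}"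
  (is "?R = ?A \<union> ?B")
proof
  have "sector_vertex t k l \<in> ?A \<union> ?B" for k l
    by (cases "k = l") (auto simp: sector_vertex_def)
  then show "?R \<subseteq> ?A \<union> ?B"
    by auto
  have "axis k 1 \<in> ?R" for k
    by (rule image_eqI[of _ _ "(k, k)"]) (simp_all add: sector_vertex_def)
  moreover have "eta_vec (t/2) k l \<in> ?R" if "k \<noteq> l" for k l
    using that by (intro image_eqI[of _ _ "(k, l)"]) (simp_all add: sector_vertex_def)
  ultimately show "?A \<union> ?B \<subseteq> ?R"
    by blast
qed

theorem theorem3p1:
  fixes \<alpha>0 :: real and b :: real
  assumes m2: "CARD('n::finite) \<ge> 2"
    and a0: "0 < \<alpha>0" "\<alpha>0 < pi / 2"
    and b_def: "b = tan \<alpha>0 / 2"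
  shows "b > 0 \<and> Arg (Complex (1/2) b) = \<alpha>0 \<and> Arg (Complex (1/2) (- b)) = - \<alpha>0
    \<and> convex (sector_simplex \<alpha>0 :: (complex ^ 'n) set)
    \<and> {x. x extreme_point_of (sector_simplex \<alpha>0 :: (complex ^ 'n) set)}
        = {axis k 1 | k. True} \<union> {eta_vec b k l | k l. k \<noteq> l}
    \<and> card {x. x extreme_point_of (sector_simplex \<alpha>0 :: (complex ^ 'n) set)} = CARD('n) ^ 2"
proof -
  define t where "t = tan \<alpha>0"
  have t: "t > 0"
    using a0 by (simp add: t_def tan_gt_zero)
  have S: "(sector_simplex \<alpha>0 :: (complex ^ 'n) set) = wedge_simplex t"
    using sector_simplex_eq_wedge_simplex[OF a0] by (simp add: t_def)
  have "b > 0"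
    using t by (simp add: b_def t_def)
  moreover have "Arg (Complex (1/2) b) = \<alpha>0" "Arg (Complex (1/2) (- b)) = - \<alpha>0"
    using Arg_Complex_tan[of "1/2" \<alpha>0] Arg_Complex_tan[of "1/2" "- \<alpha>0"] a0
    by (simp_all add: b_def)
  moreover have "convex (sector_simplex \<alpha>0 :: (complex ^ 'n) set)"
    by (simp add: S convex_wedge_simplex)
  moreover have "{x. x extreme_point_of (sector_simplex \<alpha>0 :: (complex ^ 'n) set)}
      = {axis k 1 | k. True} \<union> {eta_vec b k l | k l. k \<noteq> l}"
    unfolding S extreme_points_wedge_simplex[OF t] range_sector_vertex by (simp add: b_def t_def)
  moreover have "card {x. x extreme_point_of (sector_simplex \<alpha>0 :: (complex ^ 'n) set)} = CARD('n) ^ 2"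
  proof -
    have "card {x. x extreme_point_of (sector_simplex \<alpha>0 :: (complex ^ 'n) set)}
        = card (UNIV :: ('n \<times> 'n) set)"
      unfolding S extreme_points_wedge_simplex[OF t] using inj_sector_vertex[OF t] by (rule card_image)
    then show ?thesis
      by (simp add: power2_eq_square flip: UNIV_Times_UNIV)
  qed
  ultimately show ?thesis
    by blast
qed

end
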